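(* Let $(M,g,S)$, $p$, $u$, $\varphi$, $\beta_3$ and $e_1,e_2$ be as in the context. Give each $v\in\beta_3$ coordinates $(x,y)$ by $v=xe_1+ye_2$. For $a\in\mathbb R$, the circle $k_3=\{v\in\beta_3:\tilde g(v,v)=a\}$ has the equation $$\frac{2\cos\varphi-1}{1-\cos\varphi}\,x^2+\frac{2\cos\varphi+1}{1+\cos\varphi}\,y^2=a.$$
   Context: $M$ is a 4-dimensional differentiable manifold with a positive definite metric $g$ and a tensor field $S$ of type $(1,1)$ whose components in some local coordinate system form the matrix with rows $(0,1,0,0)$, $(0,0,1,0)$, $(0,0,0,1)$, $(-1,0,0,0)$; hence $S^4=-\mathrm{id}$, and $g(Su,Sv)=g(u,v)$ for all vector fields $u,v$. The associated metric is $\tilde g(u,v)=g(u,Sv)+g(Su,v)$. Here $p\in M$, $u\in T_pM$ is a $g$-unit vector such that $\{u,Su,S^2u,S^3u\}$ is a basis of $T_pM$, $\varphi=\angle(u,Su)$ with respect to $g$ (so $\cos\varphi=g(u,Su)$; known: $\frac{\pi}{4}<\varphi<\frac{3\pi}{4}$), $\beta_3=\mathrm{span}\{u,S^3u\}$, and $e_1=\frac{1}{\sqrt{2(1-\cos\varphi)}}(u+S^3u)$, $e_2=\frac{1}{\sqrt{2(1+\cos\varphi)}}(-u+S^3u)$ (a $g$-orthonormal basis of $\beta_3$). *)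

theory Defs
  imports "HOL-Analysis.Analysis"
begin

text \<open>Tangent space T_pM is modelled as real^4 (components in the given local
coordinate system). The structure S has, in these coordinates, the matrix with
rows (0,1,0,0),(0,0,1,0),(0,0,0,1),(-1,0,0,0).\<close>

definition Smat :: "real^4^4" where
  "Smat = vector [vector [0,1,0,0], vector [0,0,1,0], vector [0,0,0,1], vector [-1,0,0,0]]"

definition Sop :: "real^4 \<Rightarrow> real^4" where
  "Sop v = Smat *v v"

definition gmet :: "real^4^4 \<Rightarrow> real^4 \<Rightarrow> real^4 \<Rightarrow> real" where
  "gmet G v w = v \<bullet> (G *v w)"

definition gtilde :: "real^4^4 \<Rightarrow> real^4 \<Rightarrow> real^4 \<Rightarrow> real" where
  "gtilde G v w = gmet G v (Sop w) + gmet G (Sop v) w"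

end

theory Submission
  imports Defs
begin

text \<open>
  Write \<open>w = S\<^sup>3u\<close> and \<open>c = cos \<phi> = g(u,Su)\<close>. Since \<open>S\<^sup>4 = -id\<close> we have \<open>Sw = -u\<close>, and
  because \<open>S\<close> is a \<open>g\<close>-isometry, \<open>g(u,S\<^sup>2u) = g(S\<^sup>2u,S\<^sup>4u) = -g(u,S\<^sup>2u)\<close>, so \<open>g(w,Su) = 0\<close>
  and \<open>g(w,u) = g(Sw,Su) = -c\<close>. Hence for \<open>v = A u + B w\<close>, with \<open>Sv = A Su - B u\<close>,
  \<open>g\<^sup>~(v,v) = 2 g(v,Sv) = 2 (c (A\<^sup>2 + B\<^sup>2) - A B)\<close>. In the coordinates of \<open>e\<^sub>1, e\<^sub>2\<close> one has
  \<open>A = x/\<surd>(2(1-c)) - y/\<surd>(2(1+c))\<close> and \<open>B = x/\<surd>(2(1-c)) + y/\<surd>(2(1+c))\<close>, and expanding gives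
  the equation of the circle.
\<close>

lemma vector_4_nth [simp]:
  "(vector [x, y, z, t] :: ('a::zero)^4) $ 1 = x"
  "(vector [x, y, z, t] :: ('a::zero)^4) $ 2 = y"
  "(vector [x, y, z, t] :: ('a::zero)^4) $ 3 = z"
  "(vector [x, y, z, t] :: ('a::zero)^4) $ 4 = t"
  unfolding vector_def by simp_all

lemma Sop_add: "Sop (v + w) = Sop v + Sop w"
  by (simp add: Sop_def matrix_vector_right_distrib)

lemma Sop_scaleR: "Sop (r *\<^sub>R v) = r *\<^sub>R Sop v"
  by (simp add: Sop_def matrix_vector_mult_scaleR)

lemma Sop_Sop_Sop_Sop: "Sop (Sop (Sop (Sop v))) = - v"
  unfolding Sop_def Smat_def
  by (simp add: vec_eq_iff forall_4 matrix_vector_mult_def sum_4)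

lemma gmet_add_left: "gmet G (v + v') w = gmet G v w + gmet G v' w"
  by (simp add: gmet_def inner_add_left)

lemma gmet_add_right: "gmet G v (w + w') = gmet G v w + gmet G v w'"
  by (simp add: gmet_def matrix_vector_right_distrib inner_add_right)

lemma gmet_scaleR_left: "gmet G (r *\<^sub>R v) w = r * gmet G v w"
  by (simp add: gmet_def)

lemma gmet_scaleR_right: "gmet G v (r *\<^sub>R w) = r * gmet G v w"
  by (simp add: gmet_def matrix_vector_mult_scaleR)

lemma gmet_minus_left: "gmet G (- v) w = - gmet G v w"
  by (simp add: gmet_def)

lemma gmet_diff_right: "gmet G v (w - w') = gmet G v w - gmet G v w'"
  by (simp add: gmet_def matrix_vector_mult_diff_distrib inner_diff_right)

lemma gmet_commute: "transpose G = G \<Longrightarrow> gmet G v w = gmet G w v"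
  unfolding gmet_def by (metis dot_lmul_matrix inner_commute vector_transpose_matrix)

lemma gtilde_diag: "transpose G = G \<Longrightarrow> gtilde G v v = 2 * gmet G v (Sop v)"
  unfolding gtilde_def by (simp add: gmet_commute[of G "Sop v" v])

lemma gmet_Sop_Sop_orthogonal:
  assumes sym: "transpose G = G"
    and isom: "\<forall>v w. gmet G (Sop v) (Sop w) = gmet G v w"
  shows "gmet G u (Sop (Sop u)) = 0"
proof -
  have "gmet G (Sop (Sop u)) u = gmet G (Sop (Sop (Sop (Sop u)))) (Sop (Sop u))"
    using isom by metis
  also have "\<dots> = - gmet G u (Sop (Sop u))"
    by (simp add: Sop_Sop_Sop_Sop gmet_minus_left)
  finally show ?thesis
    using gmet_commute[OF sym, of "Sop (Sop u)" u] by simp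
qed

lemma gtilde_span_u_Sop3:
  assumes sym: "transpose G = G"
    and isom: "\<forall>v w. gmet G (Sop v) (Sop w) = gmet G v w"
    and unit: "gmet G u u = 1"
  defines "w \<equiv> Sop (Sop (Sop u))" and "c \<equiv> gmet G u (Sop u)"
  shows "gtilde G (A *\<^sub>R u + B *\<^sub>R w) (A *\<^sub>R u + B *\<^sub>R w) = 2 * (c * (A\<^sup>2 + B\<^sup>2) - A * B)"
proof -
  have Sop_w: "Sop w = - u"
    unfolding w_def by (rule Sop_Sop_Sop_Sop)
  have w_Su: "gmet G w (Sop u) = 0"
    using isom gmet_Sop_Sop_orthogonal[OF sym isom, of u] gmet_commute[OF sym]
    unfolding w_def by metis
  have w_u: "gmet G w u = - c"
    using isom[rule_format, of w u] by (simp add: Sop_w gmet_minus_left c_def)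
  have "Sop (A *\<^sub>R u + B *\<^sub>R w) = A *\<^sub>R Sop u - B *\<^sub>R u"
    by (simp add: Sop_add Sop_scaleR Sop_w)
  moreover have "gmet G (A *\<^sub>R u + B *\<^sub>R w) (A *\<^sub>R Sop u - B *\<^sub>R u) = c * (A\<^sup>2 + B\<^sup>2) - A * B"
    by (simp add: gmet_add_left gmet_diff_right gmet_scaleR_left gmet_scaleR_right
        w_Su w_u unit flip: c_def) (simp add: algebra_simps power2_eq_square)
  ultimately show ?thesis
    by (simp add: gtilde_diag[OF sym])
qed

lemma abs_cos_less_one: "0 < t \<Longrightarrow> t < pi \<Longrightarrow> \<bar>cos t\<bar> < 1"
proof -
  assume "0 < t" "t < pi"
  then have "(cos t)\<^sup>2 < 1"
    using sin_gt_zero[of t] by (simp add: cos_squared_eq)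
  then show ?thesis
    by (simp add: abs_square_less_1)
qed

lemma quadratic_form_in_orthonormal_coordinates:
  fixes c x y :: real
  assumes "\<bar>c\<bar> < 1"
  defines "s1 \<equiv> sqrt (2 * (1 - c))" and "s2 \<equiv> sqrt (2 * (1 + c))"
  shows "2 * (c * ((x / s1 - y / s2)\<^sup>2 + (x / s1 + y / s2)\<^sup>2) - (x / s1 - y / s2) * (x / s1 + y / s2))
    = (2 * c - 1) / (1 - c) * x\<^sup>2 + (2 * c + 1) / (1 + c) * y\<^sup>2"
proof -
  have "1 - c > 0" "1 + c > 0"
    using assms(1) by auto
  then have "s1\<^sup>2 = 2 * (1 - c)" "s2\<^sup>2 = 2 * (1 + c)"
    unfolding s1_def s2_def by simp_all
  have "2 * (c * ((x / s1 - y / s2)\<^sup>2 + (x / s1 + y / s2)\<^sup>2) - (x / s1 - y / s2) * (x / s1 + y / s2))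
     = (4 * c - 2) * x\<^sup>2 / s1\<^sup>2 + (4 * c + 2) * y\<^sup>2 / s2\<^sup>2"
    by (simp add: power2_eq_square algebra_simps add_divide_distrib diff_divide_distrib)
  also have "\<dots> = (2 * c - 1) / (1 - c) * x\<^sup>2 + (2 * c + 1) / (1 + c) * y\<^sup>2"
  proof -
    have "(4 * c - 2) * x\<^sup>2 / (2 * (1 - c)) = (2 * c - 1) / (1 - c) * x\<^sup>2"
      and "(4 * c + 2) * y\<^sup>2 / (2 * (1 + c)) = (2 * c + 1) / (1 + c) * y\<^sup>2"
      using \<open>1 - c > 0\<close> \<open>1 + c > 0\<close> by (simp_all add: field_simps)
    then show ?thesis
      unfolding \<open>s1\<^sup>2 = _\<close> \<open>s2\<^sup>2 = _\<close> by simp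
  qed
  finally show ?thesis .
qed

theorem theorem5p9:
  fixes G :: "real^4^4" and u :: "real^4" and \<phi> :: real
  assumes G_sym: "transpose G = G"
    and G_pos: "\<forall>v. v \<noteq> 0 \<longrightarrow> gmet G v v > 0"
    and S_isom: "\<forall>v w. gmet G (Sop v) (Sop w) = gmet G v w"
    and u_unit: "gmet G u u = 1"
    and u_basis: "independent {u, Sop u, Sop (Sop u), Sop (Sop (Sop u))}"
    and u_card: "card {u, Sop u, Sop (Sop u), Sop (Sop (Sop u))} = 4"
    and phi_angle: "0 \<le> \<phi> \<and> \<phi> \<le> pi \<and> cos \<phi> = gmet G u (Sop u)"
    and phi_range: "pi / 4 < \<phi> \<and> \<phi> < 3 * pi / 4"
  shows "\<forall>a x y.
    (let e1 = (1 / sqrt (2 * (1 - cos \<phi>))) *\<^sub>R (u + Sop (Sop (Sop u)));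
         e2 = (1 / sqrt (2 * (1 + cos \<phi>))) *\<^sub>R (- u + Sop (Sop (Sop u)));
         v = x *\<^sub>R e1 + y *\<^sub>R e2
     in gtilde G v v = a \<longleftrightarrow>
        (2 * cos \<phi> - 1) / (1 - cos \<phi>) * x\<^sup>2 + (2 * cos \<phi> + 1) / (1 + cos \<phi>) * y\<^sup>2 = a)"
proof (intro allI)
  fix a x y :: real
  define c where "c = cos \<phi>"
  define s1 where "s1 = sqrt (2 * (1 - c))"
  define s2 where "s2 = sqrt (2 * (1 + c))"
  define w where "w = Sop (Sop (Sop u))"
  have c_eq: "c = gmet G u (Sop u)"
    using phi_angle c_def by simp
  have c_bound: "\<bar>c\<bar> < 1"
    unfolding c_def using phi_range pi_gt_zero by (intro abs_cos_less_one) linarith+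
  have v_eq: "x *\<^sub>R ((1 / s1) *\<^sub>R (u + w)) + y *\<^sub>R ((1 / s2) *\<^sub>R (- u + w))
      = (x / s1 - y / s2) *\<^sub>R u + (x / s1 + y / s2) *\<^sub>R w"
    by (simp add: algebra_simps)
  have "gtilde G (x *\<^sub>R ((1 / s1) *\<^sub>R (u + w)) + y *\<^sub>R ((1 / s2) *\<^sub>R (- u + w)))
      (x *\<^sub>R ((1 / s1) *\<^sub>R (u + w)) + y *\<^sub>R ((1 / s2) *\<^sub>R (- u + w)))
      = (2 * c - 1) / (1 - c) * x\<^sup>2 + (2 * c + 1) / (1 + c) * y\<^sup>2"
    unfolding v_eq
    unfolding w_def gtilde_span_u_Sop3[OF G_sym S_isom u_unit] c_eq[symmetric] s1_def s2_def
    by (rule quadratic_form_in_orthonormal_coordinates[OF c_bound])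
  then show "let e1 = (1 / sqrt (2 * (1 - cos \<phi>))) *\<^sub>R (u + Sop (Sop (Sop u)));
         e2 = (1 / sqrt (2 * (1 + cos \<phi>))) *\<^sub>R (- u + Sop (Sop (Sop u)));
         v = x *\<^sub>R e1 + y *\<^sub>R e2
     in gtilde G v v = a \<longleftrightarrow>
        (2 * cos \<phi> - 1) / (1 - cos \<phi>) * x\<^sup>2 + (2 * cos \<phi> + 1) / (1 + cos \<phi>) * y\<^sup>2 = a"
    unfolding Let_def s1_def s2_def w_def c_def by (simp only:)
qed

end
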